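(* Let $k,l,m$ be positive integers and let $G=G(k,l,m)$ be the tree defined as follows: start with a vertex $y$; add vertices $x_1,\dots,x_k$ each adjacent to $y$; for each $a\in\{1,\dots,k\}$ add vertices $w_{a,1},\dots,w_{a,l}$ each adjacent to $x_a$; for each $a,b$ add a vertex $v_{a,b}$ adjacent to $w_{a,b}$; and for each $a,b$ add $m$ leaves $u_{a,b,1},\dots,u_{a,b,m}$ adjacent to $v_{a,b}$. Then $n(G)=klm+2kl+k+1$, $\gamma_t(G)=2kl+1$, and $\Gamma_t(G)=k\big((m+1)^l-m^l\big)^k$.
   Context: For a graph $G$ without isolated vertices, a set $D\subseteq V(G)$ is total dominating if every vertex of $G$ has a neighbour in $D$. The total domination number $\gamma_t(G)$ is the minimum size of a total dominating set, and $\Gamma_t(G)$ is the number of total dominating sets of size $\gamma_t(G)$. $n(G)$ is the number of vertices. *)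

theory Defs
  imports Main
begin

definition total_dominating :: "'a set \<Rightarrow> ('a \<Rightarrow> 'a \<Rightarrow> bool) \<Rightarrow> 'a set \<Rightarrow> bool" where
  "total_dominating Vs E D \<longleftrightarrow> D \<subseteq> Vs \<and> (\<forall>v\<in>Vs. \<exists>u\<in>D. E v u)"

definition total_domination_number :: "'a set \<Rightarrow> ('a \<Rightarrow> 'a \<Rightarrow> bool) \<Rightarrow> nat" where
  "total_domination_number Vs E = (LEAST n. \<exists>D. total_dominating Vs E D \<and> card D = n)"

definition num_min_total_dominating :: "'a set \<Rightarrow> ('a \<Rightarrow> 'a \<Rightarrow> bool) \<Rightarrow> nat" where
  "num_min_total_dominating Vs E =
     card {D. total_dominating Vs E D \<and> card D = total_domination_number Vs E}"

datatype vtx = Y | X nat | W nat nat | V nat nat | U nat nat nat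

definition G_verts :: "nat \<Rightarrow> nat \<Rightarrow> nat \<Rightarrow> vtx set" where
  "G_verts k l m = {Y} \<union> {X a | a. a \<in> {1..k}}
     \<union> {W a b | a b. a \<in> {1..k} \<and> b \<in> {1..l}}
     \<union> {V a b | a b. a \<in> {1..k} \<and> b \<in> {1..l}}
     \<union> {U a b c | a b c. a \<in> {1..k} \<and> b \<in> {1..l} \<and> c \<in> {1..m}}"

definition G_edges :: "nat \<Rightarrow> nat \<Rightarrow> nat \<Rightarrow> (vtx \<times> vtx) set" where
  "G_edges k l m = {(Y, X a) | a. a \<in> {1..k}}
     \<union> {(X a, W a b) | a b. a \<in> {1..k} \<and> b \<in> {1..l}}
     \<union> {(W a b, V a b) | a b. a \<in> {1..k} \<and> b \<in> {1..l}}
     \<union> {(V a b, U a b c) | a b c. a \<in> {1..k} \<and> b \<in> {1..l} \<and> c \<in> {1..m}}"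

definition G_adj :: "nat \<Rightarrow> nat \<Rightarrow> nat \<Rightarrow> vtx \<Rightarrow> vtx \<Rightarrow> bool" where
  "G_adj k l m u v \<longleftrightarrow> (u, v) \<in> G_edges k l m \<or> (v, u) \<in> G_edges k l m"

end

theory Submission
  imports Defs "HOL-Library.FuncSet"
begin

text \<open>A total dominating set must contain some X a (to dominate Y), every V a b (to dominate
  the leaves U a b c), and a neighbour of each V a b, i.e. a vertex of {W a b} \<union> {U a b c}.
  These 2kl + 1 demands are met by pairwise distinct vertices, and a set consisting of exactly
  such vertices is total dominating iff every X a has some chosen W a b as neighbour (Y is not
  in it). A minimum set is therefore determined by the index of its X-vertex (k choices) and,
  independently for each branch a, by a choice of neighbours of V a 1, \<dots>, V a l that are not
  all leaves ((m + 1)^l - m^l choices).\<close>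

lemma total_domination_number_eqI:
  assumes "total_dominating Vs E D0" and "card D0 = n"
    and "\<And>D. total_dominating Vs E D \<Longrightarrow> n \<le> card D"
  shows "total_domination_number Vs E = n"
  unfolding total_domination_number_def
  by (rule Least_equality) (use assms in auto)

lemma card_PiE_not_subset:
  assumes "finite I" "\<And>i. i \<in> I \<Longrightarrow> finite (A i)" "\<And>i. i \<in> I \<Longrightarrow> B i \<subseteq> A i"
  shows "card {f \<in> PiE I A. \<exists>i\<in>I. f i \<notin> B i} = (\<Prod>i\<in>I. card (A i)) - (\<Prod>i\<in>I. card (B i))"
proof -
  have "{f \<in> PiE I A. \<exists>i\<in>I. f i \<notin> B i} = PiE I A - PiE I B"
    by (auto simp: PiE_def Pi_def)
  moreover have "PiE I B \<subseteq> PiE I A" by (rule PiE_mono) (use assms(3) in auto)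
  moreover have "finite (PiE I B)"
    using assms by (intro finite_PiE) (auto intro: finite_subset)
  ultimately show ?thesis
    using assms(1) by (simp add: card_Diff_subset card_PiE)
qed

lemma G_verts_simps [simp]:
  "Y \<in> G_verts k l m"
  "X a \<in> G_verts k l m \<longleftrightarrow> a \<in> {1..k}"
  "W a b \<in> G_verts k l m \<longleftrightarrow> a \<in> {1..k} \<and> b \<in> {1..l}"
  "V a b \<in> G_verts k l m \<longleftrightarrow> a \<in> {1..k} \<and> b \<in> {1..l}"
  "U a b c \<in> G_verts k l m \<longleftrightarrow> a \<in> {1..k} \<and> b \<in> {1..l} \<and> c \<in> {1..m}"
  by (auto simp: G_verts_def)

lemma G_adj_simps [simp]:
  "G_adj k l m Y v \<longleftrightarrow> (\<exists>a\<in>{1..k}. v = X a)"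
  "G_adj k l m (X a) v \<longleftrightarrow> a \<in> {1..k} \<and> (v = Y \<or> (\<exists>b\<in>{1..l}. v = W a b))"
  "G_adj k l m (W a b) v \<longleftrightarrow> a \<in> {1..k} \<and> b \<in> {1..l} \<and> (v = X a \<or> v = V a b)"
  "G_adj k l m (V a b) v \<longleftrightarrow> a \<in> {1..k} \<and> b \<in> {1..l} \<and> (v = W a b \<or> (\<exists>c\<in>{1..m}. v = U a b c))"
  "G_adj k l m (U a b c) v \<longleftrightarrow> a \<in> {1..k} \<and> b \<in> {1..l} \<and> c \<in> {1..m} \<and> v = V a b"
  by (cases v; auto simp: G_adj_def G_edges_def)+

lemma G_verts_eq:
  "G_verts k l m = insert Y (X ` {1..k}
     \<union> case_prod W ` ({1..k} \<times> {1..l}) \<union> case_prod V ` ({1..k} \<times> {1..l})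
     \<union> (\<lambda>(a, b, c). U a b c) ` ({1..k} \<times> {1..l} \<times> {1..m}))"
proof (rule set_eqI)
  fix x show "x \<in> G_verts k l m \<longleftrightarrow> x \<in> insert Y (X ` {1..k}
     \<union> case_prod W ` ({1..k} \<times> {1..l}) \<union> case_prod V ` ({1..k} \<times> {1..l})
     \<union> (\<lambda>(a, b, c). U a b c) ` ({1..k} \<times> {1..l} \<times> {1..m}))"
    by (cases x) (auto intro: rev_image_eqI[where x = "(a, b, c)" for a b c])
qed

lemma finite_G_verts: "finite (G_verts k l m)"
  by (simp add: G_verts_eq)

lemma card_G_verts: "card (G_verts k l m) = k * l * m + 2 * k * l + k + 1"
proof -
  have "card (G_verts k l m) = Suc (k + k * l + k * l + k * l * m)"
    unfolding G_verts_eq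
    by (subst card_insert_disjoint card_Un_disjoint card_image, auto simp: inj_on_def)+
  then show ?thesis by (simp add: algebra_simps)
qed

definition nbhd_V :: "nat \<Rightarrow> nat \<Rightarrow> nat \<Rightarrow> vtx set" where
  "nbhd_V m a b = insert (W a b) (U a b ` {1..m})"

definition nbhd_choice :: "nat \<Rightarrow> nat \<Rightarrow> nat \<Rightarrow> (nat \<Rightarrow> nat \<Rightarrow> vtx) \<Rightarrow> bool" where
  "nbhd_choice k l m H \<longleftrightarrow> (\<forall>a\<in>{1..k}. \<forall>b\<in>{1..l}. H a b \<in> nbhd_V m a b)"

definition td_set_of :: "nat \<Rightarrow> nat \<Rightarrow> nat \<Rightarrow> (nat \<Rightarrow> nat \<Rightarrow> vtx) \<Rightarrow> vtx set" where
  "td_set_of k l a0 H =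
     insert (X a0) (case_prod V ` ({1..k} \<times> {1..l}) \<union> case_prod H ` ({1..k} \<times> {1..l}))"

lemma not_in_nbhd_V [simp]:
  "Y \<notin> nbhd_V m a b" "X c \<notin> nbhd_V m a b" "V c d \<notin> nbhd_V m a b"
  by (auto simp: nbhd_V_def)

lemma nbhd_V_disjoint: "x \<in> nbhd_V m a b \<Longrightarrow> x \<in> nbhd_V m a' b' \<Longrightarrow> a = a' \<and> b = b'"
  by (auto simp: nbhd_V_def)

lemma card_nbhd_V: "card (nbhd_V m a b) = m + 1"
  unfolding nbhd_V_def by (subst card_insert_disjoint) (auto simp: card_image inj_on_def)

lemma card_td_set_of:
  assumes "nbhd_choice k l m H"
  shows "card (td_set_of k l a0 H) = 2 * k * l + 1"
proof -
  let ?P = "{1..k} \<times> {1..l}"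
  have H: "H a b \<in> nbhd_V m a b" if "(a, b) \<in> ?P" for a b
    using assms that by (auto simp: nbhd_choice_def)
  have "inj_on (case_prod V) ?P" by (auto simp: inj_on_def)
  then have card_V: "card (case_prod V ` ?P) = k * l" by (simp add: card_image)
  have "inj_on (case_prod H) ?P"
  proof (rule inj_onI)
    fix p q assume "p \<in> ?P" "q \<in> ?P" "case_prod H p = case_prod H q"
    then show "p = q"
      using H nbhd_V_disjoint by (cases p, cases q) (metis (no_types, lifting) case_prod_conv)
  qed
  then have card_H: "card (case_prod H ` ?P) = k * l" by (simp add: card_image)
  have "V c d \<noteq> H a b" "X c \<noteq> H a b" if "(a, b) \<in> ?P" for a b c d
    using H[OF that] by (metis not_in_nbhd_V(3), metis not_in_nbhd_V(2))
  then have "case_prod V ` ?P \<inter> case_prod H ` ?P = {}"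
    and "X a0 \<notin> case_prod V ` ?P \<union> case_prod H ` ?P"
    by (fastforce simp del: mem_Sigma_iff)+
  then show ?thesis
    unfolding td_set_of_def using card_V card_H by (simp add: card_Un_disjoint)
qed

lemma mem_td_set_of:
  "x \<in> td_set_of k l a0 H \<longleftrightarrow> x = X a0 \<or> (\<exists>a\<in>{1..k}. \<exists>b\<in>{1..l}. x = V a b \<or> x = H a b)"
  by (auto simp: td_set_of_def)

lemma td_set_of_cong:
  assumes "\<And>a b. a \<in> {1..k} \<Longrightarrow> b \<in> {1..l} \<Longrightarrow> H a b = H' a b"
  shows "td_set_of k l a0 H = td_set_of k l a0 H'"
proof -
  have "case_prod H ` ({1..k} \<times> {1..l}) = case_prod H' ` ({1..k} \<times> {1..l})"
    using assms by (intro image_cong) auto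
  then show ?thesis by (simp add: td_set_of_def)
qed

lemma mem_td_set_of_choice:
  assumes "nbhd_choice k l m H"
  shows "x \<in> td_set_of k l a0 H \<longleftrightarrow>
    x = X a0 \<or> (\<exists>a\<in>{1..k}. \<exists>b\<in>{1..l}. x = V a b \<or> (x = H a b \<and> x \<in> nbhd_V m a b))"
  using assms unfolding mem_td_set_of nbhd_choice_def by blast

lemma td_set_of_Int_nbhd_V:
  assumes "nbhd_choice k l m H" and "a \<in> {1..k}" and "b \<in> {1..l}"
  shows "td_set_of k l a0 H \<inter> nbhd_V m a b = {H a b}"
proof -
  have "x = H a b" if x_td: "x \<in> td_set_of k l a0 H" and x_nb: "x \<in> nbhd_V m a b" for x
  proof -
    obtain a' b' where "a' \<in> {1..k}" "b' \<in> {1..l}" "x = H a' b'"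
      using x_td x_nb unfolding mem_td_set_of by (metis not_in_nbhd_V(2,3))
    with assms(1) x_nb show ?thesis
      unfolding nbhd_choice_def by (metis nbhd_V_disjoint)
  qed
  moreover have "H a b \<in> td_set_of k l a0 H \<inter> nbhd_V m a b"
    using assms unfolding Int_iff mem_td_set_of nbhd_choice_def by blast
  ultimately show ?thesis by blast
qed

lemma nbhd_V_subset_G_verts:
  "a \<in> {1..k} \<Longrightarrow> b \<in> {1..l} \<Longrightarrow> nbhd_V m a b \<subseteq> G_verts k l m"
  by (auto simp: nbhd_V_def)

lemma G_adj_V_iff:
  "G_adj k l m (V a b) v \<longleftrightarrow> a \<in> {1..k} \<and> b \<in> {1..l} \<and> v \<in> nbhd_V m a b"
  by (auto simp: nbhd_V_def)

lemma td_set_of_memI: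
  "X a0 \<in> td_set_of k l a0 H"
  "a \<in> {1..k} \<Longrightarrow> b \<in> {1..l} \<Longrightarrow> V a b \<in> td_set_of k l a0 H"
  "a \<in> {1..k} \<Longrightarrow> b \<in> {1..l} \<Longrightarrow> H a b \<in> td_set_of k l a0 H"
  unfolding mem_td_set_of by blast+

lemma td_set_of_subset_G_verts:
  assumes a0: "a0 \<in> {1..k}" and H: "nbhd_choice k l m H"
  shows "td_set_of k l a0 H \<subseteq> G_verts k l m"
proof
  fix x assume "x \<in> td_set_of k l a0 H"
  then consider "x = X a0" | a b where "a \<in> {1..k}" "b \<in> {1..l}" "x = V a b \<or> x = H a b"
    unfolding mem_td_set_of by blast
  then show "x \<in> G_verts k l m"
  proof cases
    case 2
    have "H a b \<in> G_verts k l m"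
      using 2 H nbhd_V_subset_G_verts[OF 2(1,2)] unfolding nbhd_choice_def by blast
    with 2 show ?thesis by auto
  qed (use a0 in simp)
qed

lemma total_dominating_td_set_of:
  assumes a0: "a0 \<in> {1..k}" and H: "nbhd_choice k l m H"
    and HW: "\<forall>a\<in>{1..k}. \<exists>b\<in>{1..l}. H a b = W a b"
  shows "total_dominating (G_verts k l m) (G_adj k l m) (td_set_of k l a0 H)"
  unfolding total_dominating_def
proof
  show "td_set_of k l a0 H \<subseteq> G_verts k l m"
    using a0 H by (rule td_set_of_subset_G_verts)
  show "\<forall>v\<in>G_verts k l m. \<exists>u\<in>td_set_of k l a0 H. G_adj k l m v u"
  proof
    fix v assume v: "v \<in> G_verts k l m"
    show "\<exists>u\<in>td_set_of k l a0 H. G_adj k l m v u"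
    proof (cases v)
      case Y
      then show ?thesis using a0 by (intro bexI[of _ "X a0"] td_set_of_memI) auto
    next
      case (X a)
      with v have a: "a \<in> {1..k}" by simp
      with HW obtain b where b: "b \<in> {1..l}" "H a b = W a b" by blast
      have "W a b \<in> td_set_of k l a0 H" by (metis b(2) td_set_of_memI(3)[OF a b(1)])
      with X a b(1) show ?thesis by (intro bexI[of _ "W a b"]) auto
    next
      case (W a b)
      then show ?thesis using v by (intro bexI[of _ "V a b"] td_set_of_memI) auto
    next
      case (V a b)
      with v H have "a \<in> {1..k}" "b \<in> {1..l}" "H a b \<in> nbhd_V m a b"
        by (auto simp: nbhd_choice_def)
      then show ?thesis
        unfolding V G_adj_V_iff by (intro bexI[of _ "H a b"] td_set_of_memI) auto
    next
      case (U a b c)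
      then show ?thesis using v by (intro bexI[of _ "V a b"] td_set_of_memI) auto
    qed
  qed
qed

lemma total_dominating_contains_td_set_of:
  assumes TD: "total_dominating (G_verts k l m) (G_adj k l m) D" and "m \<ge> 1"
  obtains a0 H where "a0 \<in> {1..k}" "nbhd_choice k l m H" "td_set_of k l a0 H \<subseteq> D"
proof -
  have dom: "\<exists>u\<in>D. G_adj k l m v u" if "v \<in> G_verts k l m" for v
    using TD that by (simp add: total_dominating_def)
  obtain a0 where a0: "a0 \<in> {1..k}" "X a0 \<in> D" using dom[of Y] by auto
  have V: "V a b \<in> D" if "a \<in> {1..k}" "b \<in> {1..l}" for a b
    using dom[of "U a b 1"] that \<open>m \<ge> 1\<close> by auto
  have "\<exists>u. u \<in> D \<inter> nbhd_V m a b" if "a \<in> {1..k}" "b \<in> {1..l}" for a b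
    using dom[of "V a b"] that unfolding G_adj_V_iff by auto
  then obtain H where H: "\<forall>a\<in>{1..k}. \<forall>b\<in>{1..l}. H a b \<in> D \<inter> nbhd_V m a b"
    by metis
  then have "nbhd_choice k l m H" by (simp add: nbhd_choice_def)
  moreover have "td_set_of k l a0 H \<subseteq> D"
    using a0(2) V H unfolding mem_td_set_of subset_iff by blast
  ultimately show ?thesis using that a0(1) by blast
qed

lemma finite_total_dominating:
  "total_dominating (G_verts k l m) E D \<Longrightarrow> finite D"
  unfolding total_dominating_def by (meson finite_G_verts finite_subset)

lemma card_total_dominating_ge:
  assumes TD: "total_dominating (G_verts k l m) (G_adj k l m) D" and "m \<ge> 1"
  shows "2 * k * l + 1 \<le> card D"
proof -
  obtain a0 H where "nbhd_choice k l m H" "td_set_of k l a0 H \<subseteq> D"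
    using total_dominating_contains_td_set_of[OF assms] .
  then show ?thesis
    using card_mono[OF finite_total_dominating[OF TD]] card_td_set_of by metis
qed

lemma total_domination_number_G:
  assumes "k \<ge> 1" and "l \<ge> 1" and "m \<ge> 1"
  shows "total_domination_number (G_verts k l m) (G_adj k l m) = 2 * k * l + 1"
proof (rule total_domination_number_eqI)
  have W: "nbhd_choice k l m W" by (simp add: nbhd_choice_def nbhd_V_def)
  show "total_dominating (G_verts k l m) (G_adj k l m) (td_set_of k l 1 W)"
    using assms by (intro total_dominating_td_set_of W) auto
  show "card (td_set_of k l 1 W) = 2 * k * l + 1" by (rule card_td_set_of[OF W])
qed (use card_total_dominating_ge assms(3) in blast)

definition branch_choices :: "nat \<Rightarrow> nat \<Rightarrow> nat \<Rightarrow> (nat \<Rightarrow> vtx) set" where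
  "branch_choices l m a = {h \<in> PiE {1..l} (nbhd_V m a). \<exists>b\<in>{1..l}. h b = W a b}"

lemma card_branch_choices: "card (branch_choices l m a) = (m + 1) ^ l - m ^ l"
proof -
  have "h b = W a b \<longleftrightarrow> h b \<notin> U a b ` {1..m}"
    if "h \<in> PiE {1..l} (nbhd_V m a)" "b \<in> {1..l}" for h b
    using PiE_mem[OF that] by (auto simp: nbhd_V_def)
  then have "branch_choices l m a = {h \<in> PiE {1..l} (nbhd_V m a). \<exists>b\<in>{1..l}. h b \<notin> U a b ` {1..m}}"
    unfolding branch_choices_def by (intro Collect_cong conj_cong bex_cong) auto
  also have "card \<dots> = (\<Prod>b\<in>{1..l}. card (nbhd_V m a b)) - (\<Prod>b\<in>{1..l}. card (U a b ` {1..m}))"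
    by (rule card_PiE_not_subset) (auto simp: nbhd_V_def)
  also have "\<dots> = (m + 1) ^ l - m ^ l"
    by (simp add: card_nbhd_V card_image inj_on_def)
  finally show ?thesis .
qed

lemma branch_choices_nbhd_choice:
  "H \<in> PiE {1..k} (branch_choices l m) \<Longrightarrow> nbhd_choice k l m H"
  by (simp add: nbhd_choice_def branch_choices_def PiE_iff)

lemma branch_choices_hit_W:
  "H \<in> PiE {1..k} (branch_choices l m) \<Longrightarrow> \<forall>a\<in>{1..k}. \<exists>b\<in>{1..l}. H a b = W a b"
  by (simp add: branch_choices_def PiE_iff)

lemma inj_on_td_set_of:
  "inj_on (\<lambda>(a0, H). td_set_of k l a0 H) ({1..k} \<times> PiE {1..k} (branch_choices l m))"
proof (rule inj_onI, clarify)
  fix a0 H a0' H'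
  assume H: "H \<in> PiE {1..k} (branch_choices l m)" and H': "H' \<in> PiE {1..k} (branch_choices l m)"
    and eq: "td_set_of k l a0 H = td_set_of k l a0' H'"
  have choice: "nbhd_choice k l m H" "nbhd_choice k l m H'"
    using H H' by (simp_all add: branch_choices_nbhd_choice)
  have "X a0 \<in> td_set_of k l a0' H'"
    using eq td_set_of_memI(1) by metis
  then have "a0 = a0'" by (simp add: mem_td_set_of_choice[OF choice(2)])
  moreover have "H a b = H' a b" if "a \<in> {1..k}" "b \<in> {1..l}" for a b
    using td_set_of_Int_nbhd_V[OF choice(1) that, of a0]
      td_set_of_Int_nbhd_V[OF choice(2) that, of a0'] eq
    by simp
  then have "H a = H' a" if "a \<in> {1..k}" for a
    using PiE_mem[OF H that] PiE_mem[OF H' that] that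
    unfolding branch_choices_def by (intro PiE_ext[of "H a" _ "nbhd_V m a"]) auto
  then have "H = H'" by (rule PiE_ext[OF H H'])
  ultimately show "a0 = a0' \<and> H = H'" ..
qed

lemma min_total_dominating_is_td_set_of:
  assumes TD: "total_dominating (G_verts k l m) (G_adj k l m) D"
    and card: "card D = 2 * k * l + 1" and "m \<ge> 1"
  obtains a0 H where "a0 \<in> {1..k}" "H \<in> PiE {1..k} (branch_choices l m)"
    "D = td_set_of k l a0 H"
proof -
  obtain a0 G where a0: "a0 \<in> {1..k}" and G: "nbhd_choice k l m G" and sub: "td_set_of k l a0 G \<subseteq> D"
    using total_dominating_contains_td_set_of[OF TD \<open>m \<ge> 1\<close>] .
  have D: "D = td_set_of k l a0 G"
    using card_subset_eq[OF finite_total_dominating[OF TD] sub] card_td_set_of[OF G] card by simp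
  define H where "H = (\<lambda>a\<in>{1..k}. \<lambda>b\<in>{1..l}. G a b)"
  have "H a \<in> branch_choices l m a" if a: "a \<in> {1..k}" for a
  proof -
    have "\<exists>u\<in>D. G_adj k l m (X a) u"
      using TD a G_verts_simps(2) unfolding total_dominating_def by blast
    then obtain u where "u \<in> D" "G_adj k l m (X a) u" by blast
    moreover have "Y \<notin> D"
      using D G by (simp add: mem_td_set_of_choice)
    ultimately obtain b where b: "b \<in> {1..l}" "W a b \<in> D" by auto
    then have "W a b = G a b"
      using td_set_of_Int_nbhd_V[OF G a b(1), of a0] D by (auto simp: nbhd_V_def)
    then have "H a b = W a b" using a b(1) by (simp add: H_def)
    moreover have "H a \<in> PiE {1..l} (nbhd_V m a)"
      using G a by (simp add: H_def nbhd_choice_def)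
    ultimately show ?thesis
      using b(1) unfolding branch_choices_def by blast
  qed
  then have "H \<in> PiE {1..k} (branch_choices l m)" by (simp add: H_def)
  moreover have "D = td_set_of k l a0 H"
    unfolding D by (rule td_set_of_cong) (simp add: H_def)
  ultimately show ?thesis using that a0 by blast
qed

lemma min_total_dominating_sets_eq:
  assumes "m \<ge> 1"
  shows "{D. total_dominating (G_verts k l m) (G_adj k l m) D \<and> card D = 2 * k * l + 1}
    = (\<lambda>(a0, H). td_set_of k l a0 H) ` ({1..k} \<times> PiE {1..k} (branch_choices l m))"
proof (intro set_eqI iffI)
  fix D assume "D \<in> (\<lambda>(a0, H). td_set_of k l a0 H) ` ({1..k} \<times> PiE {1..k} (branch_choices l m))"
  then obtain a0 H where a0: "a0 \<in> {1..k}" and H: "H \<in> PiE {1..k} (branch_choices l m)"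
    and D: "D = td_set_of k l a0 H" by auto
  have "total_dominating (G_verts k l m) (G_adj k l m) D"
    unfolding D using a0 branch_choices_nbhd_choice[OF H] branch_choices_hit_W[OF H]
    by (rule total_dominating_td_set_of)
  moreover have "card D = 2 * k * l + 1"
    unfolding D using branch_choices_nbhd_choice[OF H] by (rule card_td_set_of)
  ultimately show "D \<in> {D. total_dominating (G_verts k l m) (G_adj k l m) D \<and> card D = 2 * k * l + 1}"
    by simp
next
  fix D assume "D \<in> {D. total_dominating (G_verts k l m) (G_adj k l m) D \<and> card D = 2 * k * l + 1}"
  then obtain a0 H where "a0 \<in> {1..k}" "H \<in> PiE {1..k} (branch_choices l m)" "D = td_set_of k l a0 H"
    using min_total_dominating_is_td_set_of assms by blast
  then show "D \<in> (\<lambda>(a0, H). td_set_of k l a0 H) ` ({1..k} \<times> PiE {1..k} (branch_choices l m))"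
    by blast
qed

theorem mainTheorem5:
  fixes k l m :: nat
  assumes "k \<ge> 1" and "l \<ge> 1" and "m \<ge> 1"
  shows "card (G_verts k l m) = k * l * m + 2 * k * l + k + 1
       \<and> total_domination_number (G_verts k l m) (G_adj k l m) = 2 * k * l + 1
       \<and> num_min_total_dominating (G_verts k l m) (G_adj k l m)
           = k * ((m + 1) ^ l - m ^ l) ^ k"
proof (intro conjI)
  show "card (G_verts k l m) = k * l * m + 2 * k * l + k + 1"
    by (rule card_G_verts)
  show gamma: "total_domination_number (G_verts k l m) (G_adj k l m) = 2 * k * l + 1"
    using total_domination_number_G assms by blast
  have "num_min_total_dominating (G_verts k l m) (G_adj k l m)
      = card ((\<lambda>(a0, H). td_set_of k l a0 H) ` ({1..k} \<times> PiE {1..k} (branch_choices l m)))"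
    unfolding num_min_total_dominating_def gamma min_total_dominating_sets_eq[OF assms(3)] ..
  also have "\<dots> = card ({1..k} \<times> PiE {1..k} (branch_choices l m))"
    by (rule card_image[OF inj_on_td_set_of])
  also have "\<dots> = k * ((m + 1) ^ l - m ^ l) ^ k"
    by (simp add: card_cartesian_product card_PiE card_branch_choices)
  finally show "num_min_total_dominating (G_verts k l m) (G_adj k l m)
      = k * ((m + 1) ^ l - m ^ l) ^ k" .
qed

end
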